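(* Let $k$ be a field and $A$ a graded $k$-subalgebra of the polynomial ring $B=k[X_1,\dots,X_n]$ with standard grading. Suppose there is a retraction $\pi:B\to A$ with $\pi(B_+)\subseteq B_+$. Then there exist an invertible matrix $\sigma\in GL_n(k)$ (acting by linear change of variables $X_i\mapsto\sigma(X_i)=\sum_j\sigma_{ij}X_j$) and an integer $d\le n$ such that $A=k[\sigma(X_1),\dots,\sigma(X_d)]$. In particular $A$ is a polynomial ring over $k$.
   Context: The standard grading has $B_i$ the homogeneous polynomials of degree $i$; $B_+=\bigoplus_{i\ge1}B_i$. $A$ graded means $A=\bigoplus_i(A\cap B_i)$. A retraction $\pi:B\to A$ is a ring homomorphism onto $A$ restricting to the identity on $A$. *)

theory Defs
  imports "HOL-Library.Poly_Mapping"
begin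

text \<open>Polynomials over a field: finitely supported maps from monomials
(finitely supported exponent vectors) to coefficients. Variables are X_0,...,X_(n-1).\<close>

type_synonym 'a mpol = "(nat \<Rightarrow>\<^sub>0 nat) \<Rightarrow>\<^sub>0 'a"

definition Var :: "nat \<Rightarrow> 'a::field mpol" where
  "Var i = Poly_Mapping.single (Poly_Mapping.single i 1) 1"

definition Const :: "'a::field \<Rightarrow> 'a mpol" where
  "Const c = Poly_Mapping.single 0 c"

definition mdeg :: "(nat \<Rightarrow>\<^sub>0 nat) \<Rightarrow> nat" where
  "mdeg m = (\<Sum>i\<in>Poly_Mapping.keys m. Poly_Mapping.lookup m i)"

definition PolyRing :: "nat \<Rightarrow> 'a::field mpol set" where
  "PolyRing n = {p. \<forall>m\<in>Poly_Mapping.keys p. \<forall>i\<in>Poly_Mapping.keys m. i < n}"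

definition hcomp :: "nat \<Rightarrow> 'a::field mpol \<Rightarrow> 'a mpol" where
  "hcomp d p = Abs_poly_mapping (\<lambda>m. if mdeg m = d then Poly_Mapping.lookup p m else 0)"

text \<open>B_+ : sum of the components of positive degree, i.e. zero constant term\<close>
definition PolyRing_plus :: "nat \<Rightarrow> 'a::field mpol set" where
  "PolyRing_plus n = {p \<in> PolyRing n. hcomp 0 p = 0}"

definition k_subalgebra :: "nat \<Rightarrow> 'a::field mpol set \<Rightarrow> bool" where
  "k_subalgebra n A \<longleftrightarrow> A \<subseteq> PolyRing n \<and> (\<forall>c. Const c \<in> A) \<and>
     (\<forall>p\<in>A. \<forall>q\<in>A. p + q \<in> A \<and> p * q \<in> A)"

definition graded :: "'a::field mpol set \<Rightarrow> bool" where
  "graded A \<longleftrightarrow> (\<forall>p\<in>A. \<forall>d. hcomp d p \<in> A)"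

definition retraction :: "nat \<Rightarrow> 'a::field mpol set \<Rightarrow> ('a mpol \<Rightarrow> 'a mpol) \<Rightarrow> bool" where
  "retraction n A \<pi> \<longleftrightarrow>
     (\<forall>p\<in>PolyRing n. \<forall>q\<in>PolyRing n. \<pi> (p + q) = \<pi> p + \<pi> q \<and> \<pi> (p * q) = \<pi> p * \<pi> q)
     \<and> \<pi> 1 = 1 \<and> \<pi> ` PolyRing n = A \<and> (\<forall>a\<in>A. \<pi> a = a)"

definition gen_algebra :: "nat \<Rightarrow> 'a::field mpol set \<Rightarrow> 'a mpol set" where
  "gen_algebra n S = \<Inter>{C. k_subalgebra n C \<and> S \<subseteq> C}"

definition invertible_matrix :: "nat \<Rightarrow> (nat \<Rightarrow> nat \<Rightarrow> 'a::field) \<Rightarrow> bool" where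
  "invertible_matrix n \<sigma> \<longleftrightarrow> (\<exists>\<tau>. \<forall>i<n. \<forall>j<n.
      (\<Sum>k<n. \<sigma> i k * \<tau> k j) = (if i = j then 1 else 0) \<and>
      (\<Sum>k<n. \<tau> i k * \<sigma> k j) = (if i = j then 1 else 0))"

definition lin_var :: "nat \<Rightarrow> (nat \<Rightarrow> nat \<Rightarrow> 'a::field) \<Rightarrow> nat \<Rightarrow> 'a mpol" where
  "lin_var n \<sigma> i = (\<Sum>j<n. Const (\<sigma> i j) * Var j)"

end

theory Submission
  imports Defs "HOL.Vector_Spaces"
begin

text \<open>
  The retraction lets one write a homogeneous element f of A of degree e \<ge> 2 as
  f = hcomp e (\<pi> f) = \<Sum> hcomp e (\<pi> X_i \<cdot> \<pi> h_i) from any decomposition f = \<Sum> X_i h_i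
  in B. Since \<pi> X_i and \<pi> h_i lie in A \<inter> B_+ and A is graded, the degree-e part of
  each product is a sum of products of homogeneous elements of A of degrees strictly
  between 0 and e. By induction on the degree, A is generated by its degree-one part A_1.
  A basis of the space A_1 of linear forms extends to a basis of all linear forms, and
  the coefficient matrix of that basis is the required change of variables.
\<close>

abbreviation keys where "keys \<equiv> Poly_Mapping.keys"
abbreviation lookup where "lookup \<equiv> Poly_Mapping.lookup"
abbreviation single where "single \<equiv> Poly_Mapping.single"

section \<open>Homogeneous components\<close>

definition homogeneous :: "nat \<Rightarrow> 'a::field mpol \<Rightarrow> bool" where
  "homogeneous e p \<longleftrightarrow> (\<forall>m\<in>keys p. mdeg m = e)"

lemma mdeg_eq_sum: "finite K \<Longrightarrow> keys m \<subseteq> K \<Longrightarrow> mdeg m = (\<Sum>i\<in>K. lookup m i)"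
  unfolding mdeg_def by (rule sum.mono_neutral_left) (auto simp: in_keys_iff)

lemma mdeg_add: "mdeg (a + b) = mdeg a + mdeg b"
proof -
  let ?K = "keys a \<union> keys b"
  have "mdeg (a + b) = (\<Sum>i\<in>?K. lookup (a + b) i)"
    using keys_add[of a b] by (intro mdeg_eq_sum) auto
  also have "\<dots> = (\<Sum>i\<in>?K. lookup a i) + (\<Sum>i\<in>?K. lookup b i)"
    by (simp add: lookup_add sum.distrib)
  also have "\<dots> = mdeg a + mdeg b"
    using mdeg_eq_sum[of ?K a] mdeg_eq_sum[of ?K b] by simp
  finally show ?thesis .
qed

lemma mdeg_single [simp]: "mdeg (single i k) = k"
  by (simp add: mdeg_def)

lemma mdeg_eq_0_iff: "mdeg m = 0 \<longleftrightarrow> m = 0"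
  by (auto simp: mdeg_def in_keys_iff intro: poly_mapping_eqI)

lemma monomial_split_variable:
  fixes m :: "nat \<Rightarrow>\<^sub>0 nat"
  assumes "i \<in> keys m"
  shows "m = single i 1 + (m - single i 1)" and "keys (m - single i 1) \<subseteq> keys m"
proof -
  have "lookup m i \<ge> 1" using assms by (simp add: in_keys_iff)
  then show "m = single i 1 + (m - single i 1)"
    by (intro poly_mapping_eqI) (auto simp: lookup_add lookup_minus lookup_single when_def)
  show "keys (m - single i 1) \<subseteq> keys m"
    by (auto simp: in_keys_iff lookup_minus)
qed

lemma mdeg_eq_1E:
  assumes "mdeg m = 1"
  obtains j where "m = single j 1"
proof -
  have "m \<noteq> 0" using assms by (metis mdeg_eq_0_iff zero_neq_one)
  then obtain j where j: "j \<in> keys m" by fastforce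
  have "m = single j 1 + (m - single j 1)" using monomial_split_variable(1)[OF j] .
  moreover from this have "1 + mdeg (m - single j 1) = 1"
    using assms by (metis mdeg_add mdeg_single)
  then have "m - single j 1 = 0" by (simp add: mdeg_eq_0_iff)
  ultimately show ?thesis using that by simp
qed

lemma lookup_hcomp: "lookup (hcomp d p) m = (if mdeg m = d then lookup p m else 0)"
proof -
  have "finite {m. (if mdeg m = d then lookup p m else 0) \<noteq> 0}"
    by (rule finite_subset[OF _ finite_lookup[of p]]) auto
  then show ?thesis unfolding hcomp_def by simp
qed

lemma homogeneous_hcomp: "homogeneous d (hcomp d p)"
  by (auto simp: homogeneous_def in_keys_iff lookup_hcomp split: if_splits)

lemma hcomp_homogeneous: "homogeneous e p \<Longrightarrow> hcomp e p = p"
  by (intro poly_mapping_eqI) (auto simp: homogeneous_def lookup_hcomp in_keys_iff)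

lemma hcomp_homogeneous_other: "homogeneous e p \<Longrightarrow> e \<noteq> d \<Longrightarrow> hcomp d p = 0"
  by (intro poly_mapping_eqI) (auto simp: homogeneous_def lookup_hcomp in_keys_iff)

lemma hcomp_add: "hcomp d (p + q) = hcomp d p + hcomp d q"
  by (intro poly_mapping_eqI) (auto simp: lookup_hcomp lookup_add)

lemma hcomp_zero [simp]: "hcomp d 0 = 0"
  by (intro poly_mapping_eqI) (auto simp: lookup_hcomp)

lemma hcomp_sum: "hcomp d (sum f X) = (\<Sum>x\<in>X. hcomp d (f x))"
  by (induction X rule: infinite_finite_induct) (auto simp: hcomp_add)

lemma homogeneous_add: "homogeneous e p \<Longrightarrow> homogeneous e q \<Longrightarrow> homogeneous e (p + q)"
  unfolding homogeneous_def using keys_add[of p q] by blast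

lemma homogeneous_sum: "(\<And>x. x \<in> X \<Longrightarrow> homogeneous e (g x)) \<Longrightarrow> homogeneous e (sum g X)"
proof (induction X rule: infinite_finite_induct)
  case (insert x F)
  then show ?case by (simp add: homogeneous_add)
qed (simp_all add: homogeneous_def)

lemma homogeneous_mult:
  "homogeneous a p \<Longrightarrow> homogeneous b q \<Longrightarrow> homogeneous (a + b) (p * q)"
  unfolding homogeneous_def using keys_mult[of p q] by (fastforce simp: mdeg_add)

lemma homogeneous_single: "homogeneous (mdeg m) (single m c)"
  by (simp add: homogeneous_def)

lemma homogeneous_Var: "homogeneous 1 (Var i)"
  unfolding Var_def using homogeneous_single[of "single i 1" 1] by simp

lemma homogeneous_0_eq_Const: "homogeneous 0 f \<Longrightarrow> f = Const (lookup f 0)"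
  by (intro poly_mapping_eqI)
    (auto simp: homogeneous_def mdeg_eq_0_iff Const_def lookup_single when_def in_keys_iff)

lemma sum_hcomp: "p = (\<Sum>a\<in>mdeg ` keys p. hcomp a p)"
proof (rule poly_mapping_eqI)
  fix m
  have "(\<Sum>a\<in>mdeg ` keys p. lookup (hcomp a p) m) =
      (\<Sum>a\<in>mdeg ` keys p. if a = mdeg m then lookup p m else 0)"
    by (rule sum.cong) (auto simp: lookup_hcomp)
  also have "\<dots> = lookup p m"
    by (auto simp: sum.delta' in_keys_iff)
  finally show "lookup p m = lookup (\<Sum>a\<in>mdeg ` keys p. hcomp a p) m"
    by (simp add: lookup_sum)
qed

lemma hcomp_mult:
  "hcomp e (u * v) = (\<Sum>a\<in>mdeg ` keys u. \<Sum>b\<in>mdeg ` keys v.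
      if a + b = e then hcomp a u * hcomp b v else 0)"
proof -
  have "hcomp e (u * v) =
      hcomp e ((\<Sum>a\<in>mdeg ` keys u. hcomp a u) * (\<Sum>b\<in>mdeg ` keys v. hcomp b v))"
    by (simp flip: sum_hcomp)
  also have "\<dots> = (\<Sum>a\<in>mdeg ` keys u. \<Sum>b\<in>mdeg ` keys v. hcomp e (hcomp a u * hcomp b v))"
    by (simp only: sum_product hcomp_sum)
  also have "\<dots> = (\<Sum>a\<in>mdeg ` keys u. \<Sum>b\<in>mdeg ` keys v.
      if a + b = e then hcomp a u * hcomp b v else 0)"
  proof (intro sum.cong refl)
    fix a b
    have "homogeneous (a + b) (hcomp a u * hcomp b v)"
      by (intro homogeneous_mult homogeneous_hcomp)
    then show "hcomp e (hcomp a u * hcomp b v) = (if a + b = e then hcomp a u * hcomp b v else 0)"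
      by (cases "a + b = e") (simp_all add: hcomp_homogeneous hcomp_homogeneous_other)
  qed
  finally show ?thesis .
qed

lemma sum_single_lookup: "p = (\<Sum>m\<in>keys p. single m (lookup p m))"
proof (rule poly_mapping_eqI)
  fix k
  have "(\<Sum>m\<in>keys p. lookup (single m (lookup p m)) k) =
      (\<Sum>m\<in>keys p. if m = k then lookup p m else 0)"
    by (rule sum.cong) (auto simp: lookup_single when_def)
  also have "\<dots> = lookup p k" by (auto simp: in_keys_iff)
  finally show "lookup p k = lookup (\<Sum>m\<in>keys p. single m (lookup p m)) k"
    by (simp add: lookup_sum)
qed

section \<open>The polynomial ring and its subalgebras\<close>

lemma PolyRing_add: "p \<in> PolyRing n \<Longrightarrow> q \<in> PolyRing n \<Longrightarrow> p + q \<in> PolyRing n"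
  unfolding PolyRing_def using keys_add[of p q] by blast

lemma PolyRing_mult: "p \<in> PolyRing n \<Longrightarrow> q \<in> PolyRing n \<Longrightarrow> p * q \<in> PolyRing n"
proof -
  have "keys (a + b) = keys a \<union> keys b" for a b :: "nat \<Rightarrow>\<^sub>0 nat"
    by (auto simp: in_keys_iff lookup_add)
  then show "p \<in> PolyRing n \<Longrightarrow> q \<in> PolyRing n \<Longrightarrow> p * q \<in> PolyRing n"
    unfolding PolyRing_def using keys_mult[of p q] by force
qed

lemma PolyRing_zero: "0 \<in> PolyRing n"
  by (simp add: PolyRing_def)

lemma PolyRing_sum: "(\<And>x. x \<in> X \<Longrightarrow> g x \<in> PolyRing n) \<Longrightarrow> sum g X \<in> PolyRing n"
  by (induction X rule: infinite_finite_induct) (auto intro: PolyRing_add PolyRing_zero)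

lemma PolyRing_single: "(\<And>i. i \<in> keys m \<Longrightarrow> i < n) \<Longrightarrow> single m c \<in> PolyRing n"
  unfolding PolyRing_def by auto

lemma PolyRing_Var: "i < n \<Longrightarrow> Var i \<in> PolyRing n"
  unfolding Var_def by (rule PolyRing_single) auto

lemma PolyRing_plus_homogeneous:
  "p \<in> PolyRing n \<Longrightarrow> homogeneous e p \<Longrightarrow> e \<noteq> 0 \<Longrightarrow> p \<in> PolyRing_plus n"
  unfolding PolyRing_plus_def using hcomp_homogeneous_other[of e p 0] by auto

lemma Const_mult: "Const a * Const b = Const (a * b)"
  by (simp add: Const_def mult_single)

lemma Const_one: "Const 1 = 1"
  by (simp add: Const_def one_poly_mapping.abs_eq single.abs_eq)

lemma Const_zero [simp]: "Const 0 = 0"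
  by (simp add: Const_def)

lemma Const_add: "Const (a + b) = Const a + Const b"
  by (simp add: Const_def single_add)

lemma k_subalgebra_zero: "k_subalgebra n C \<Longrightarrow> 0 \<in> C"
  unfolding k_subalgebra_def by (metis Const_zero)

lemma k_subalgebra_sum:
  "k_subalgebra n C \<Longrightarrow> (\<And>x. x \<in> X \<Longrightarrow> g x \<in> C) \<Longrightarrow> sum g X \<in> C"
  by (induction X rule: infinite_finite_induct)
    (auto intro: k_subalgebra_zero simp: k_subalgebra_def)

definition smult_mpol :: "'a::field \<Rightarrow> 'a mpol \<Rightarrow> 'a mpol" where
  "smult_mpol c p = Const c * p"

interpretation mpol: vector_space "smult_mpol :: 'a::field \<Rightarrow> 'a mpol \<Rightarrow> 'a mpol"
  by unfold_locales
    (auto simp: smult_mpol_def distrib_left distrib_right Const_add Const_one Const_mult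
      mult.assoc[symmetric])

lemma subspace_k_subalgebra: "k_subalgebra n C \<Longrightarrow> mpol.subspace C"
  unfolding mpol.subspace_def k_subalgebra_def smult_mpol_def by (metis Const_zero)

lemma retraction_mult:
  "retraction n A \<pi> \<Longrightarrow> p \<in> PolyRing n \<Longrightarrow> q \<in> PolyRing n \<Longrightarrow> \<pi> (p * q) = \<pi> p * \<pi> q"
  by (simp add: retraction_def)

lemma retraction_zero: "retraction n A \<pi> \<Longrightarrow> \<pi> 0 = 0"
proof -
  assume "retraction n A \<pi>"
  then have "\<pi> (0 + 0) = \<pi> 0 + \<pi> 0"
    using PolyRing_zero unfolding retraction_def by blast
  then have "\<pi> 0 + \<pi> 0 = \<pi> 0 + 0" by simp
  then show ?thesis by (rule add_left_imp_eq)
qed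

lemma retraction_sum:
  assumes "retraction n A \<pi>" and "\<And>x. x \<in> X \<Longrightarrow> g x \<in> PolyRing n"
  shows "\<pi> (sum g X) = (\<Sum>x\<in>X. \<pi> (g x))"
  using assms(2)
proof (induction X rule: infinite_finite_induct)
  case (insert x F)
  then show ?case
    using assms(1) PolyRing_sum[of F g n] by (simp add: retraction_def)
qed (simp_all add: retraction_zero[OF assms(1)])

lemma homogeneous_split_Var:
  assumes f: "f \<in> PolyRing n" "homogeneous e f" and "e \<noteq> 0"
  obtains i h where
    "f = (\<Sum>m\<in>keys f. Var (i m) * h m)"
    "\<And>m. m \<in> keys f \<Longrightarrow> i m < n \<and> h m \<in> PolyRing n \<and> homogeneous (e - 1) (h m)"
proof
  define i where "i m = (SOME i. i \<in> keys m)" for m :: "nat \<Rightarrow>\<^sub>0 nat"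
  define h where "h m = single (m - single (i m) 1) (lookup f m)" for m
  have i_key: "i m \<in> keys m" if "m \<in> keys f" for m
  proof -
    have "mdeg m \<noteq> 0" using f(2) that \<open>e \<noteq> 0\<close> by (simp add: homogeneous_def)
    then have "\<exists>i. i \<in> keys m" by (simp add: mdeg_eq_0_iff ex_in_conv)
    then show ?thesis unfolding i_def by (rule someI_ex)
  qed
  note split = monomial_split_variable[OF i_key]
  have "single m (lookup f m) = Var (i m) * h m" if "m \<in> keys f" for m
    by (subst split(1)[OF that]) (simp add: h_def Var_def mult_single)
  then show "f = (\<Sum>m\<in>keys f. Var (i m) * h m)"
    using sum_single_lookup[of f] by (metis (no_types, lifting) sum.cong)
  fix m assume m: "m \<in> keys f"
  have "mdeg m = 1 + mdeg (m - single (i m) 1)"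
    by (subst split(1)[OF m]) (simp add: mdeg_add)
  then have "homogeneous (e - 1) (h m)"
    unfolding h_def using homogeneous_single f(2) m by (simp add: homogeneous_def)
  moreover have "i m < n" "h m \<in> PolyRing n"
    using f(1) m i_key[OF m] split(2)[OF m] unfolding h_def PolyRing_def by auto
  ultimately show "i m < n \<and> h m \<in> PolyRing n \<and> homogeneous (e - 1) (h m)" by blast
qed

lemma hcomp_mult_in_subalgebra:
  assumes C: "k_subalgebra n C" and "graded A"
    and lower: "\<And>a f. a < e \<Longrightarrow> f \<in> A \<Longrightarrow> homogeneous a f \<Longrightarrow> f \<in> C"
    and u: "u \<in> A" "hcomp 0 u = 0" and v: "v \<in> A" "hcomp 0 v = 0"
  shows "hcomp e (u * v) \<in> C"
  unfolding hcomp_mult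
proof (intro k_subalgebra_sum[OF C])
  fix a b
  show "(if a + b = e then hcomp a u * hcomp b v else 0) \<in> C"
  proof (cases "a + b = e \<and> a \<noteq> 0 \<and> b \<noteq> 0")
    case True
    have "hcomp a u \<in> A" "hcomp b v \<in> A"
      using \<open>graded A\<close> u v by (auto simp: graded_def)
    then have "hcomp a u \<in> C" "hcomp b v \<in> C"
      using True by (auto intro: lower[OF _ _ homogeneous_hcomp])
    then show ?thesis using True C by (simp add: k_subalgebra_def)
  qed (use u v k_subalgebra_zero[OF C] in auto)
qed

lemma retraction_homogeneous_sum_hcomp_mult:
  assumes \<pi>: "retraction n A \<pi>" "\<pi> ` PolyRing_plus n \<subseteq> PolyRing_plus n"
    and f: "f \<in> A" "f \<in> PolyRing n" "homogeneous e f" and "e \<ge> 2"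
  obtains u v :: "(nat \<Rightarrow>\<^sub>0 nat) \<Rightarrow> 'a::field mpol" and K where "f = (\<Sum>k\<in>K. hcomp e (u k * v k))"
    "\<And>k. k \<in> K \<Longrightarrow> u k \<in> A \<and> hcomp 0 (u k) = 0 \<and> v k \<in> A \<and> hcomp 0 (v k) = 0"
proof -
  obtain i h where f_eq: "f = (\<Sum>m\<in>keys f. Var (i m) * h m)"
    and ih: "\<And>m. m \<in> keys f \<Longrightarrow> i m < n \<and> h m \<in> PolyRing n \<and> homogeneous (e - 1) (h m)"
    using homogeneous_split_Var[OF f(2,3)] \<open>e \<ge> 2\<close> by auto
  have B_plus: "Var (i m) \<in> PolyRing_plus n" "h m \<in> PolyRing_plus n" if "m \<in> keys f" for m
    using ih[OF that] \<open>e \<ge> 2\<close> PolyRing_plus_homogeneous[OF PolyRing_Var homogeneous_Var]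
      PolyRing_plus_homogeneous[of "h m" n "e - 1"] by auto
  have \<pi>_plus: "\<pi> p \<in> A" "hcomp 0 (\<pi> p) = 0" if "p \<in> PolyRing_plus n" for p
    using that \<pi> by (auto simp: retraction_def PolyRing_plus_def)
  have "\<pi> f = (\<Sum>m\<in>keys f. \<pi> (Var (i m) * h m))"
    using ih by (subst f_eq, intro retraction_sum[OF \<pi>(1)]) (simp add: PolyRing_mult PolyRing_Var)
  also have "\<dots> = (\<Sum>m\<in>keys f. \<pi> (Var (i m)) * \<pi> (h m))"
  proof (intro sum.cong refl)
    fix m assume "m \<in> keys f"
    then have "Var (i m) \<in> PolyRing n" "h m \<in> PolyRing n" using ih PolyRing_Var by auto
    then show "\<pi> (Var (i m) * h m) = \<pi> (Var (i m)) * \<pi> (h m)"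
      by (rule retraction_mult[OF \<pi>(1)])
  qed
  finally have "hcomp e (\<pi> f) = (\<Sum>m\<in>keys f. hcomp e (\<pi> (Var (i m)) * \<pi> (h m)))"
    by (simp add: hcomp_sum)
  moreover have "hcomp e (\<pi> f) = f"
    using f \<pi>(1) hcomp_homogeneous by (simp add: retraction_def)
  ultimately have "f = (\<Sum>m\<in>keys f. hcomp e (\<pi> (Var (i m)) * \<pi> (h m)))" by simp
  moreover have "\<pi> (Var (i m)) \<in> A \<and> hcomp 0 (\<pi> (Var (i m))) = 0 \<and> \<pi> (h m) \<in> A \<and>
      hcomp 0 (\<pi> (h m)) = 0" if "m \<in> keys f" for m
    using \<pi>_plus[OF B_plus(1)[OF that]] \<pi>_plus[OF B_plus(2)[OF that]] by blast
  ultimately show ?thesis by (rule that)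
qed

lemma homogeneous_in_subalgebra_containing_degree_one:
  assumes A: "k_subalgebra n A" "graded A" "retraction n A \<pi>"
      "\<pi> ` PolyRing_plus n \<subseteq> PolyRing_plus n"
    and C: "k_subalgebra n C" and A1: "\<And>p. p \<in> A \<Longrightarrow> homogeneous 1 p \<Longrightarrow> p \<in> C"
  shows "f \<in> A \<Longrightarrow> homogeneous e f \<Longrightarrow> f \<in> C"
proof (induction e arbitrary: f rule: less_induct)
  case (less e f)
  consider "e = 0" | "e = 1" | "e \<ge> 2" by linarith
  then show ?case
  proof cases
    case 1
    have "Const (lookup f 0) \<in> C" using C by (simp add: k_subalgebra_def)
    then show ?thesis using homogeneous_0_eq_Const less.prems(2) 1 by metis
  next
    case 2
    then show ?thesis using A1 less.prems by simp
  next
    case 3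
    have "f \<in> PolyRing n" using less.prems A(1) by (auto simp: k_subalgebra_def)
    from retraction_homogeneous_sum_hcomp_mult[OF A(3,4) less.prems(1) this less.prems(2) 3]
    obtain u v :: "(nat \<Rightarrow>\<^sub>0 nat) \<Rightarrow> 'a mpol" and K where f: "f = (\<Sum>k\<in>K. hcomp e (u k * v k))"
      and uv: "\<And>k. k \<in> K \<Longrightarrow> u k \<in> A \<and> hcomp 0 (u k) = 0 \<and> v k \<in> A \<and> hcomp 0 (v k) = 0"
      by blast
    have lower: "\<And>a g. a < e \<Longrightarrow> g \<in> A \<Longrightarrow> homogeneous a g \<Longrightarrow> g \<in> C"
      using less.IH by blast
    have "(\<Sum>k\<in>K. hcomp e (u k * v k)) \<in> C"
    proof (rule k_subalgebra_sum[OF C])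
      fix k assume "k \<in> K"
      then show "hcomp e (u k * v k) \<in> C"
        using uv by (intro hcomp_mult_in_subalgebra[OF C A(2) lower]) blast+
    qed
    then show ?thesis using f by simp
  qed
qed

lemma subalgebra_generated_by_degree_one:
  assumes A: "k_subalgebra n A" "graded A" "retraction n A \<pi>"
      "\<pi> ` PolyRing_plus n \<subseteq> PolyRing_plus n"
    and S: "S \<subseteq> A" "{p \<in> A. homogeneous 1 p} \<subseteq> mpol.span S"
  shows "A = gen_algebra n S"
proof
  show "gen_algebra n S \<subseteq> A" unfolding gen_algebra_def using A(1) S(1) by blast
  show "A \<subseteq> gen_algebra n S"
  proof (clarsimp simp: gen_algebra_def)
    fix f C assume f: "f \<in> A" and C: "k_subalgebra n C" "S \<subseteq> C"
    have "mpol.span S \<subseteq> C" by (rule mpol.span_minimal[OF C(2) subspace_k_subalgebra[OF C(1)]])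
    then have A1C: "\<And>p. p \<in> A \<Longrightarrow> homogeneous 1 p \<Longrightarrow> p \<in> C" using S(2) by blast
    have "hcomp a f \<in> C" for a
      using homogeneous_in_subalgebra_containing_degree_one[OF A C(1) A1C, of "hcomp a f" a]
        \<open>graded A\<close> f by (simp add: graded_def homogeneous_hcomp)
    then show "f \<in> C" by (subst sum_hcomp) (intro k_subalgebra_sum[OF C(1)])
  qed
qed

section \<open>Linear forms\<close>

definition linear_form :: "nat \<Rightarrow> (nat \<Rightarrow> 'a::field) \<Rightarrow> 'a mpol" where
  "linear_form n c = (\<Sum>j<n. smult_mpol (c j) (Var j))"

definition lin_coeff :: "'a::field mpol \<Rightarrow> nat \<Rightarrow> 'a" where
  "lin_coeff p j = lookup p (single j 1)"

lemma lin_var_eq_linear_form: "lin_var n \<sigma> i = linear_form n (\<sigma> i)"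
  by (simp add: lin_var_def linear_form_def smult_mpol_def)

lemma smult_mpol_Var: "smult_mpol a (Var j) = single (single j 1) a"
  by (simp add: smult_mpol_def Const_def Var_def mult_single)

lemma lin_coeff_smult_Var: "lin_coeff (smult_mpol a (Var j)) k = (if j = k then a else 0)"
  by (auto simp: lin_coeff_def smult_mpol_Var lookup_single when_def
      dest: arg_cong[where f="\<lambda>m. lookup m j"])

lemma lin_coeff_Var: "lin_coeff (Var j :: 'a::field mpol) k = (if j = k then 1 else 0)"
  using lin_coeff_smult_Var[of 1 j k] by simp

lemma lin_coeff_sum: "lin_coeff (sum f X) k = (\<Sum>x\<in>X. lin_coeff (f x) k)"
  by (simp add: lin_coeff_def lookup_sum)

lemma Var_eq_iff: "Var i = (Var j :: 'a::field mpol) \<longleftrightarrow> i = j"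
  by (metis lin_coeff_Var zero_neq_one)

lemma lin_coeff_linear_form: "lin_coeff (linear_form n c) k = (if k < n then c k else 0)"
  by (simp add: linear_form_def lin_coeff_sum lin_coeff_smult_Var)

lemma linear_form_cong: "(\<And>j. j < n \<Longrightarrow> a j = b j) \<Longrightarrow> linear_form n a = linear_form n b"
  unfolding linear_form_def by (rule sum.cong) auto

lemma linear_form_add: "linear_form n a + linear_form n b = linear_form n (\<lambda>j. a j + b j)"
  by (simp add: linear_form_def sum.distrib mpol.scale_left_distrib)

lemma linear_form_smult: "smult_mpol c (linear_form n a) = linear_form n (\<lambda>j. c * a j)"
  by (simp add: linear_form_def mpol.scale_sum_right)

lemma linear_form_sum: "(\<Sum>i\<in>X. linear_form n (a i)) = linear_form n (\<lambda>j. \<Sum>i\<in>X. a i j)"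
proof (induction X rule: infinite_finite_induct)
  case (insert x F)
  then show ?case by (simp add: linear_form_add)
qed (simp_all add: linear_form_def)

lemma linear_form_Var: "j < n \<Longrightarrow> linear_form n (\<lambda>l. if l = j then 1 else 0) = Var j"
  by (simp add: linear_form_def if_distrib[of "\<lambda>c. smult_mpol c _"] cong: if_cong)

lemma linear_form_lin_coeff:
  assumes "p \<in> PolyRing n" "homogeneous 1 p"
  shows "p = linear_form n (lin_coeff p)"
proof (rule poly_mapping_eqI)
  fix m
  have homog: "homogeneous 1 (linear_form n c)" for c :: "nat \<Rightarrow> 'a"
    unfolding linear_form_def smult_mpol_Var
    by (intro homogeneous_sum) (metis homogeneous_single mdeg_single)
  show "lookup p m = lookup (linear_form n (lin_coeff p)) m"
  proof (cases "mdeg m = 1")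
    case True
    then obtain j where m: "m = single j 1" by (rule mdeg_eq_1E)
    have "j < n" if "lookup p m \<noteq> 0"
      using assms(1) that m by (auto simp: PolyRing_def in_keys_iff)
    then show ?thesis
      using lin_coeff_linear_form[of n "lin_coeff p" j] m by (auto simp: lin_coeff_def)
  next
    case False
    then show ?thesis
      using assms(2) homog by (metis homogeneous_def in_keys_iff)
  qed
qed

lemma span_Var: "mpol.span (Var ` {..<n}) = range (linear_form n)"
proof
  have "mpol.subspace (range (linear_form n))"
    unfolding mpol.subspace_def
    by (auto simp: linear_form_add linear_form_smult linear_form_def[of n "\<lambda>_. 0"]
        intro: range_eqI[where x="\<lambda>j. 0"])
  moreover have "Var ` {..<n} \<subseteq> range (linear_form n)"
    using linear_form_Var by (metis image_subsetI lessThan_iff rangeI)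
  ultimately show "mpol.span (Var ` {..<n}) \<subseteq> range (linear_form n)"
    by (rule mpol.span_minimal[rotated])
  show "range (linear_form n) \<subseteq> mpol.span (Var ` {..<n})"
    unfolding linear_form_def by (auto intro: mpol.span_sum mpol.span_scale mpol.span_base)
qed

lemma independent_Var: "mpol.independent (Var ` {..<n} :: 'a::field mpol set)"
  unfolding mpol.independent_explicit_module
proof (intro allI impI)
  fix t u v
  assume t: "finite t" "t \<subseteq> Var ` {..<n}" and sum: "(\<Sum>w\<in>t. smult_mpol (u w) w) = 0"
    and v: "v \<in> t"
  obtain k where k: "v = Var k" using v t by auto
  have "0 = lin_coeff (\<Sum>w\<in>t. smult_mpol (u w) w) k" using sum by (simp add: lin_coeff_def)
  also have "\<dots> = (\<Sum>w\<in>t. if w = v then u w else 0)"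
    unfolding lin_coeff_sum
    using t k by (intro sum.cong refl) (auto simp: lin_coeff_smult_Var Var_eq_iff)
  also have "\<dots> = u v" using v t by simp
  finally show "u v = 0" by simp
qed

lemma card_Var: "card (Var ` {..<n} :: 'a::field mpol set) = n"
  by (subst card_image) (auto simp: inj_on_def Var_eq_iff)

section \<open>Bases of linear forms and invertible matrices\<close>

lemma span_bij_betw_sum:
  assumes "bij_betw b I B" "finite I" "x \<in> mpol.span B"
  obtains u where "x = (\<Sum>i\<in>I. smult_mpol (u i) (b i))"
proof -
  have "finite B" using assms(1,2) bij_betw_finite by blast
  then obtain w where "x = (\<Sum>v\<in>B. smult_mpol (w v) v)"
    using assms(3) mpol.span_finite by auto
  also have "\<dots> = (\<Sum>i\<in>I. smult_mpol (w (b i)) (b i))"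
    by (rule sum.reindex_bij_betw[OF assms(1), symmetric])
  finally show ?thesis by (rule that)
qed

lemma independent_bij_betw_sum_eq_0:
  assumes "bij_betw b I B" "finite I" "mpol.independent B"
    and "(\<Sum>i\<in>I. smult_mpol (c i) (b i)) = 0" "i \<in> I"
  shows "c i = 0"
proof -
  let ?c = "\<lambda>v. c (the_inv_into I b v)"
  have inj: "inj_on b I" using assms(1) bij_betw_def by blast
  have "(\<Sum>v\<in>B. smult_mpol (?c v) v) = 0"
    using assms(4) sum.reindex_bij_betw[OF assms(1), of "\<lambda>v. smult_mpol (?c v) v"]
    by (simp add: the_inv_into_f_f[OF inj])
  then have "?c (b i) = 0"
    using assms(1,2,3,5) by (intro mpol.independentD[OF assms(3)])
      (auto simp: bij_betw_finite bij_betw_apply)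
  then show ?thesis using the_inv_into_f_f[OF inj assms(5)] by simp
qed

lemma invertible_matrix_if_rows_basis:
  assumes bij: "bij_betw (\<lambda>i. linear_form n (\<sigma> i)) {..<n} B"
    and indep: "mpol.independent B" and span: "Var ` {..<n} \<subseteq> mpol.span B"
  shows "invertible_matrix n \<sigma>"
proof -
  let ?b = "\<lambda>i. linear_form n (\<sigma> i)"
  have "\<exists>u. Var k = (\<Sum>j<n. smult_mpol (u j) (?b j))" if "k < n" for k
    using span_bij_betw_sum[OF bij _ subsetD[OF span]] that by blast
  then obtain \<tau> where \<tau>: "\<And>k. k < n \<Longrightarrow> Var k = (\<Sum>j<n. smult_mpol (\<tau> k j) (?b j))"
    by metis
  have left: "(\<Sum>j<n. \<tau> k j * \<sigma> j l) = (if k = l then 1 else 0)" if "k < n" "l < n" for k l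
  proof -
    have "Var k = (\<Sum>j<n. smult_mpol (\<tau> k j) (?b j))" using \<tau> that(1) .
    also have "\<dots> = linear_form n (\<lambda>l. \<Sum>j<n. \<tau> k j * \<sigma> j l)"
      by (simp only: linear_form_smult linear_form_sum)
    finally have "lin_coeff (Var k) l = lin_coeff (linear_form n (\<lambda>l. \<Sum>j<n. \<tau> k j * \<sigma> j l)) l"
      by (rule arg_cong)
    then show ?thesis using that(2) by (simp add: lin_coeff_linear_form lin_coeff_Var)
  qed
  have right: "(\<Sum>k<n. \<sigma> i k * \<tau> k j) = (if i = j then 1 else 0)" if "i < n" "j < n" for i j
  proof -
    define c where "c j = (\<Sum>k<n. \<sigma> i k * \<tau> k j) - (if i = j then 1 else 0)" for j
    have "(\<Sum>j<n. smult_mpol (\<Sum>k<n. \<sigma> i k * \<tau> k j) (?b j)) =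
        (\<Sum>j<n. \<Sum>k<n. smult_mpol (\<sigma> i k * \<tau> k j) (?b j))"
      by (simp add: mpol.scale_sum_left)
    also have "\<dots> = (\<Sum>k<n. \<Sum>j<n. smult_mpol (\<sigma> i k * \<tau> k j) (?b j))"
      by (rule sum.swap)
    also have "\<dots> = (\<Sum>k<n. smult_mpol (\<sigma> i k) (\<Sum>j<n. smult_mpol (\<tau> k j) (?b j)))"
      by (simp add: mpol.scale_sum_right)
    also have "\<dots> = ?b i"
      unfolding linear_form_def[of n "\<sigma> i"] using \<tau> by (intro sum.cong refl) simp
    also have "\<dots> = (\<Sum>j<n. smult_mpol (if i = j then 1 else 0) (?b j))"
      using that(1) by (simp add: if_distrib[of "\<lambda>c. smult_mpol c _"] cong: if_cong)
    finally have "(\<Sum>j<n. smult_mpol (\<Sum>k<n. \<sigma> i k * \<tau> k j) (?b j)) =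
        (\<Sum>j<n. smult_mpol (if i = j then 1 else 0) (?b j))" .
    then have "(\<Sum>j<n. smult_mpol (c j) (?b j)) = 0"
      by (simp add: c_def mpol.scale_left_diff_distrib sum_subtractf)
    then have "c j = 0"
      using independent_bij_betw_sum_eq_0[OF bij _ indep] that(2) by blast
    then show ?thesis unfolding c_def by simp
  qed
  show ?thesis unfolding invertible_matrix_def using left right by blast
qed

lemma ex_bij_betw_lessThan_extending:
  assumes "finite B" "S \<subseteq> B"
  obtains b where "bij_betw b {..<card B} B" "b ` {..<card S} = S"
proof -
  have S: "finite S" "card S \<le> card B" using assms finite_subset card_mono by auto
  obtain f where f: "bij_betw f {..<card S} S"
    using ex_bij_betw_nat_finite[OF S(1)] by (auto simp: atLeast0LessThan)
  obtain g where g: "bij_betw g {card S..<card B} (B - S)"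
    using finite_same_card_bij[of "{card S..<card B}" "B - S"] assms S
    by (auto simp: card_Diff_subset)
  let ?b = "\<lambda>i. if i \<in> {..<card S} then f i else g i"
  have "bij_betw ?b ({..<card S} \<union> {card S..<card B}) (S \<union> (B - S))"
    by (rule bij_betw_disjoint_Un[OF f g]) auto
  moreover have "{..<card S} \<union> {card S..<card B} = {..<card B}" "S \<union> (B - S) = B"
    using S(2) assms(2) by auto
  moreover have "?b ` {..<card S} = S"
    using f by (simp add: bij_betw_def)
  ultimately show ?thesis using that by auto
qed

lemma independent_linear_forms_extend_invertible:
  assumes indep: "mpol.independent S" and lin: "S \<subseteq> range (linear_form n)"
  obtains \<sigma> d where "invertible_matrix n \<sigma>" "d \<le> n" "lin_var n \<sigma> ` {..<d} = S"
proof -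
  let ?V = "range (linear_form n)" and ?T = "Var ` {..<n} :: 'a mpol set"
  obtain B where B: "S \<subseteq> B" "B \<subseteq> ?V" "mpol.independent B" "?V \<subseteq> mpol.span B"
    using mpol.maximal_independent_subset_extend[OF lin indep] by blast
  have "B \<subseteq> mpol.span ?T" using B(2) span_Var by blast
  then have "finite B \<and> card B \<le> card ?T"
    by (intro mpol.independent_span_bound B(3)) simp
  then have finB: "finite B" and "card B \<le> n"
    unfolding card_Var by auto
  moreover have T_span: "?T \<subseteq> mpol.span B"
    using B(4) mpol.span_superset[of ?T] unfolding span_Var by (rule order_trans[rotated])
  then have "n \<le> card B"
    using mpol.independent_span_bound[OF finB independent_Var] unfolding card_Var by blast
  ultimately have cardB: "card B = n" by simp
  obtain b where b: "bij_betw b {..<n} B" "b ` {..<card S} = S"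
    using ex_bij_betw_lessThan_extending[OF finB B(1)] cardB by metis
  define \<sigma> where "\<sigma> i = lin_coeff (b i)" for i
  have b_eq: "b i = linear_form n (\<sigma> i)" if "i < n" for i
  proof -
    have "b i \<in> range (linear_form n)" using B(2) bij_betw_apply[OF b(1)] that by blast
    then obtain c where c: "b i = linear_form n c" by blast
    have "linear_form n (lin_coeff (linear_form n c)) = linear_form n c"
      by (rule linear_form_cong) (simp add: lin_coeff_linear_form)
    then show ?thesis unfolding \<sigma>_def c by (rule sym)
  qed
  have "card S \<le> n" using card_mono[OF finB B(1)] cardB by simp
  moreover have "lin_var n \<sigma> ` {..<card S} = S"
    using b(2) calculation by (auto simp: lin_var_eq_linear_form b_eq image_def)
  moreover have "bij_betw (\<lambda>i. linear_form n (\<sigma> i)) {..<n} B"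
    using b(1) by (rule bij_betw_cong[THEN iffD1, rotated]) (simp add: b_eq)
  then have "invertible_matrix n \<sigma>"
    using B(3) T_span by (rule invertible_matrix_if_rows_basis)
  ultimately show ?thesis using that by blast
qed

theorem corollary5p15:
  fixes n :: nat and A :: "'a::field mpol set" and \<pi> :: "'a mpol \<Rightarrow> 'a mpol"
  assumes "k_subalgebra n A" and "graded A"
    and "retraction n A \<pi>"
    and "\<pi> ` PolyRing_plus n \<subseteq> PolyRing_plus n"
  shows "\<exists>\<sigma> d. invertible_matrix n \<sigma> \<and> d \<le> n \<and>
           A = gen_algebra n (lin_var n \<sigma> ` {..<d})"
proof -
  define A1 where "A1 = {p \<in> A. homogeneous 1 p}"
  obtain S where S: "S \<subseteq> A1" "mpol.independent S" "A1 \<subseteq> mpol.span S"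
    by (rule mpol.maximal_independent_subset)
  have "A1 \<subseteq> range (linear_form n)"
    using assms(1) linear_form_lin_coeff by (fastforce simp: A1_def k_subalgebra_def)
  then obtain \<sigma> d where \<sigma>: "invertible_matrix n \<sigma>" "d \<le> n" "lin_var n \<sigma> ` {..<d} = S"
    using independent_linear_forms_extend_invertible S by (metis subset_trans)
  have "A = gen_algebra n S"
    using S by (intro subalgebra_generated_by_degree_one[OF assms]) (auto simp: A1_def)
  then show ?thesis using \<sigma> by blast
qed

end
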